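(* Let $A$ and $B$ be commutative associative unital algebras over $\mathbb{C}$ or $\mathbb{R}$, and assume $B$ is connected in the sense that for every $k\ge0$ and $b\in B$, $b(b-1)(b-2)\cdots(b-k)=0$ implies $b=j$ for some $j\in\{0,1,\dots,k\}$. Let $\mathbf{f}\colon A\to B$ be a linear map such that there is $N\in\mathbb{N}$ with the property that for every $a\in A$ the characteristic function $R(\mathbf{f},a,z)$ is a polynomial in $z$ of degree at most $N$. Then $\mathbf{f}(1)=n$ for some integer $n$ with $0\le n\le N$, $R(\mathbf{f},1,z)=(1+z)^n$, and for every $a\in A$, $R(\mathbf{f},a,z)$ is a polynomial in $z$ of degree at most $n$.
   Context: For a linear map $\mathbf{f}\colon A\to B$, its characteristic function is the formal power series $R(\mathbf{f},a,z)=\exp\bigl(\mathbf{f}(\ln(1+az))\bigr)\in B[[z]]$, where $\ln(1+az)=\sum_{k\ge1}(-1)^{k-1}a^kz^k/k$ and $\mathbf{f}$ is applied coefficientwise. *)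

theory Defs
  imports "HOL-Analysis.Analysis" "HOL-Computational_Algebra.Formal_Power_Series"
begin

text \<open>Exponential of a formal power series with zero constant term, over a real algebra:
  exp g = sum over k of g^k / k!; the n-th coefficient only involves k \<le> n.\<close>
definition fps_exp_alg :: "'b::{real_algebra_1,comm_ring_1} fps \<Rightarrow> 'b fps" where
  "fps_exp_alg g = Abs_fps (\<lambda>n. \<Sum>k\<le>n. scaleR (1 / fact k) (fps_nth (g ^ k) n))"

definition fps_ln1p :: "'a::{real_algebra_1,comm_ring_1} \<Rightarrow> 'a fps" where
  "fps_ln1p a = Abs_fps (\<lambda>k. if k = 0 then 0
      else scaleR ((-1) ^ (k - 1) / real k) (a ^ k))"

definition char_fun :: "('a::{real_algebra_1,comm_ring_1} \<Rightarrow> 'b::{real_algebra_1,comm_ring_1})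
    \<Rightarrow> 'a \<Rightarrow> 'b fps" where
  "char_fun f a = fps_exp_alg (Abs_fps (\<lambda>k. f (fps_nth (fps_ln1p a) k)))"

definition connected_alg :: "'b::{real_algebra_1,comm_ring_1} itself \<Rightarrow> bool" where
  "connected_alg _ \<longleftrightarrow> (\<forall>(k::nat) (b::'b). (\<Prod>j\<le>k. b - of_nat j) = 0 \<longrightarrow> (\<exists>j\<le>k. b = of_nat j))"

end

theory Submission
  imports Defs
begin

(* Write E a = R(f, a, z) = exp (G a) with G a = f (ln (1 + a z)), so that E a' = G a' E a.
   For a = 1 we have G 1 = f(1) ln (1 + z), hence (1 + z) E 1' = f(1) E 1 and
   k! [z^k] E 1 = f(1) (f(1) - 1) ... (f(1) - k + 1).  Since the coefficient of z^(N+1)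
   vanishes, connectedness gives f(1) = n <= N, and then E 1 = exp (ln (1 + z))^n = (1 + z)^n.
   For general a, the factorisation 1 + a z = (1 + z) (1 + (a - 1) W) with W = z / (1 + z)
   gives E a = (1 + z)^n * (E (a - 1) o W).  As E (a - 1) has degree <= N, the series
   (1 + z)^N * (E (a - 1) o W) is a polynomial of degree <= N; hence so is (1 + z)^(N - n) * E a,
   and comparing top coefficients shows that E a has degree <= n. *)

no_notation vec_nth (infixl \<open>$\<close> 90)
unbundle fps_syntax

lemma fps_compose_nth_cong:
  assumes "\<And>i. i \<le> n \<Longrightarrow> a $ i = b $ i"
  shows "(a oo c) $ n = (b oo c) $ n"
  using assms by (simp add: fps_compose_nth)

lemma fps_mult_nth_cong:
  assumes "\<And>i. i \<le> n \<Longrightarrow> a $ i = a' $ i"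
    and "\<And>i. i \<le> n \<Longrightarrow> b $ i = b' $ i"
  shows "(a * b) $ n = (a' * b') $ n"
  using assms by (simp add: fps_mult_nth)

lemma fps_cutoff_eq_sum:
  "fps_cutoff n (a :: 'a::comm_semiring_1 fps) = (\<Sum>i<n. fps_const (a $ i) * fps_X ^ i)"
  by (rule fps_ext) (simp add: fps_sum_nth fps_X_power_nth mult_delta_right)

lemma fps_X_power_compose_ring:
  fixes c :: "'a::comm_ring_1 fps"
  assumes c0: "c $ 0 = 0"
  shows "fps_X ^ k oo c = c ^ k"
proof (rule fps_ext)
  fix n
  show "(fps_X ^ k oo c) $ n = c ^ k $ n"
  proof (cases "k \<le> n")
    case True
    then show ?thesis by (simp add: fps_compose_nth if_distrib[of "\<lambda>x. x * _"] cong: if_cong)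
  next
    case False
    then show ?thesis using startsby_zero_power_prefix[OF c0] by (simp add: fps_compose_nth)
  qed
qed

(* The library states the following composition rules for integral domains only.  Over a
   commutative ring we reduce them to polynomials by truncating with fps_cutoff. *)

context
  fixes c :: "'a::comm_ring_1 fps"
  assumes c0: "c $ 0 = 0"
begin

lemma fps_compose_monomial: "(fps_const x * fps_X ^ k) oo c = fps_const x * c ^ k"
  by (simp add: fps_const_mult_apply_left[symmetric] fps_X_power_compose_ring[OF c0])

lemma fps_cutoff_compose: "fps_cutoff n a oo c = (\<Sum>i<n. fps_const (a $ i) * c ^ i)"
  by (simp add: fps_cutoff_eq_sum fps_compose_sum_distrib fps_compose_monomial)

lemma fps_cutoff_mult_compose:
  "(fps_cutoff n a * fps_cutoff n b) oo c = (fps_cutoff n a oo c) * (fps_cutoff n b oo c)"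
proof -
  have monomial: "(fps_const x * fps_X ^ i * (fps_const y * fps_X ^ j)) oo c
      = fps_const x * c ^ i * (fps_const y * c ^ j)" for x y i j
  proof -
    have "fps_const x * fps_X ^ i * (fps_const y * fps_X ^ j) oo c
        = fps_const (x * y) * fps_X ^ (i + j) oo c"
      by (simp only: fps_const_mult[symmetric] power_add mult_ac)
    also have "\<dots> = fps_const (x * y) * c ^ (i + j)"
      by (rule fps_compose_monomial)
    also have "\<dots> = fps_const x * c ^ i * (fps_const y * c ^ j)"
      by (simp only: fps_const_mult[symmetric] power_add mult_ac)
    finally show ?thesis .
  qed
  show ?thesis
    by (simp only: fps_cutoff_eq_sum sum_product fps_compose_sum_distrib monomial fps_compose_monomial)
qed

lemma fps_compose_mult_distrib_ring: "(a * b) oo c = (a oo c) * (b oo c)"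
proof (rule fps_ext)
  fix n
  let ?a = "fps_cutoff (Suc n) a" and ?b = "fps_cutoff (Suc n) b"
  have "((a * b) oo c) $ n = ((?a * ?b) oo c) $ n"
    by (intro fps_compose_nth_cong fps_mult_nth_cong) simp_all
  also have "\<dots> = ((?a oo c) * (?b oo c)) $ n"
    by (simp only: fps_cutoff_mult_compose)
  also have "\<dots> = ((a oo c) * (b oo c)) $ n"
    by (intro fps_mult_nth_cong fps_compose_nth_cong) simp_all
  finally show "((a * b) oo c) $ n = ((a oo c) * (b oo c)) $ n" .
qed

lemma fps_deriv_cutoff_compose:
  "fps_deriv (fps_cutoff (Suc n) a oo c) = (fps_cutoff n (fps_deriv a) oo c) * fps_deriv c"
proof -
  have "fps_deriv (fps_cutoff (Suc n) a oo c)
      = (\<Sum>i<Suc n. fps_const (a $ i) * (of_nat i * fps_deriv c * c ^ (i - 1)))"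
    by (simp add: fps_cutoff_compose fps_deriv_sum fps_deriv_power')
  also have "\<dots> = (\<Sum>i<n. fps_const (a $ Suc i) * (of_nat (Suc i) * fps_deriv c * c ^ i))"
    by (subst sum.lessThan_Suc_shift) simp
  also have "\<dots> = (\<Sum>i<n. fps_const (of_nat (Suc i) * a $ Suc i) * c ^ i) * fps_deriv c"
    by (simp only: sum_distrib_left sum_distrib_right fps_const_mult[symmetric] fps_of_nat mult_ac)
  also have "\<dots> = (fps_cutoff n (fps_deriv a) oo c) * fps_deriv c"
    by (simp only: fps_cutoff_compose fps_deriv_nth Suc_eq_plus1)
  finally show ?thesis .
qed

lemma fps_compose_deriv_ring: "fps_deriv (a oo c) = (fps_deriv a oo c) * fps_deriv c"
proof (rule fps_ext)
  fix n
  have "fps_deriv (a oo c) $ n = fps_deriv (fps_cutoff (Suc (Suc n)) a oo c) $ n"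
    using fps_compose_nth_cong[of "Suc n" a "fps_cutoff (Suc (Suc n)) a" c] by simp
  also have "\<dots> = ((fps_cutoff (Suc n) (fps_deriv a) oo c) * fps_deriv c) $ n"
    by (simp only: fps_deriv_cutoff_compose)
  also have "\<dots> = ((fps_deriv a oo c) * fps_deriv c) $ n"
    by (intro fps_mult_nth_cong fps_compose_nth_cong) simp_all
  finally show "fps_deriv (a oo c) $ n = ((fps_deriv a oo c) * fps_deriv c) $ n" .
qed

end

definition fps_map :: "('a \<Rightarrow> 'b) \<Rightarrow> 'a fps \<Rightarrow> 'b fps" where
  "fps_map f F = Abs_fps (\<lambda>k. f (F $ k))"

lemma fps_map_nth [simp]: "fps_map f F $ k = f (F $ k)"
  by (simp add: fps_map_def)

lemma linear_fps_map_add: "linear f \<Longrightarrow> fps_map f (F + G) = fps_map f F + fps_map f G"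
  by (rule fps_ext) (simp add: linear_add)

lemma fps_map_of_real_mult:
  "fps_map of_real (r * s) = (fps_map of_real r * fps_map of_real s :: 'a::real_algebra_1 fps)"
  by (rule fps_ext) (simp add: fps_mult_nth)

lemma fps_map_of_real_power:
  "fps_map of_real (r ^ k) = (fps_map of_real r ^ k :: 'a::real_algebra_1 fps)"
proof (induction k)
  case 0
  show ?case by (rule fps_ext) simp
next
  case (Suc k)
  then show ?case by (simp add: fps_map_of_real_mult)
qed

lemma linear_fps_map_compose:
  fixes f :: "'a::{real_algebra_1,comm_ring_1} \<Rightarrow> 'b::{real_algebra_1,comm_ring_1}"
  assumes "linear f"
  shows "fps_map f (a oo fps_map of_real r) = fps_map f a oo fps_map of_real r"
proof (rule fps_ext)
  fix n
  have "fps_map f (a oo fps_map of_real r) $ n = f (\<Sum>i = 0..n. ((r ^ i) $ n) *\<^sub>R (a $ i))"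
    by (simp add: fps_compose_nth fps_map_of_real_power[symmetric] scaleR_conv_of_real mult.commute)
  also have "\<dots> = (\<Sum>i = 0..n. ((r ^ i) $ n) *\<^sub>R f (a $ i))"
    using assms by (simp add: linear_sum linear_scale)
  also have "\<dots> = (fps_map f a oo fps_map of_real r) $ n"
    by (simp add: fps_compose_nth fps_map_of_real_power[symmetric] scaleR_conv_of_real mult.commute)
  finally show "fps_map f (a oo fps_map of_real r) $ n = (fps_map f a oo fps_map of_real r) $ n" .
qed

lemma char_fun_conv_fps_map: "char_fun f a = fps_exp_alg (fps_map f (fps_ln1p a))"
  by (simp add: char_fun_def fps_map_def)

definition fps_geom :: "'a::comm_ring_1 \<Rightarrow> 'a fps" where
  "fps_geom r = Abs_fps (\<lambda>k. r ^ k)"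

lemma fps_geom_nth [simp]: "fps_geom r $ k = r ^ k"
  by (simp add: fps_geom_def)

lemma fps_geom_inverse: "(1 + fps_const r * fps_X) * fps_geom (- r) = 1"
proof (rule fps_ext)
  fix k
  show "((1 + fps_const r * fps_X) * fps_geom (- r)) $ k = (1 :: 'a fps) $ k"
    by (cases k) (simp_all add: distrib_right mult.assoc)
qed

lemma fps_ode_unique:
  fixes F H P :: "'a::{real_algebra_1,comm_ring_1} fps"
  assumes F: "fps_deriv F = P * F" and H: "fps_deriv H = P * H" and "F $ 0 = H $ 0"
  shows "F = H"
proof (rule fps_ext)
  fix k show "F $ k = H $ k"
  proof (induction k rule: less_induct)
    case (less k)
    show ?case
    proof (cases k)
      case 0
      with \<open>F $ 0 = H $ 0\<close> show ?thesis by simp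
    next
      case (Suc m)
      have "real (Suc m) *\<^sub>R (F $ Suc m) = fps_deriv F $ m"
        by (simp add: scaleR_conv_of_real del: of_nat_Suc)
      also have "\<dots> = fps_deriv H $ m"
        unfolding F H using less Suc by (intro fps_mult_nth_cong) simp_all
      also have "\<dots> = real (Suc m) *\<^sub>R (H $ Suc m)"
        by (simp add: scaleR_conv_of_real del: of_nat_Suc)
      finally show ?thesis using Suc by simp
    qed
  qed
qed

lemma fps_deriv_fps_ln1p:
  "fps_deriv (fps_ln1p (a :: 'a::{real_algebra_1,comm_ring_1})) = fps_const a * fps_geom (- a)"
proof (rule fps_ext)
  fix k
  have "fps_deriv (fps_ln1p a) $ k = of_nat (Suc k) * (((-1) ^ k / real (Suc k)) *\<^sub>R a ^ Suc k)"
    by (simp add: fps_ln1p_def del: of_nat_Suc)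
  also have "\<dots> = (real (Suc k) * ((-1) ^ k / real (Suc k))) *\<^sub>R a ^ Suc k"
    by (simp only: scaleR_scaleR[symmetric] scaleR_conv_of_real[of "real (Suc k)"] of_real_of_nat_eq)
  also have "\<dots> = (fps_const a * fps_geom (- a)) $ k"
    by (simp add: power_minus[of a] scaleR_conv_of_real mult_ac del: of_nat_Suc)
  finally show "fps_deriv (fps_ln1p a) $ k = (fps_const a * fps_geom (- a)) $ k" .
qed

lemma fps_ln1p_nth_0 [simp]: "fps_ln1p a $ 0 = 0"
  by (simp add: fps_ln1p_def)

lemma linear_fps_map_fps_ln1p_1:
  fixes f :: "'a::{real_algebra_1,comm_ring_1} \<Rightarrow> 'b::{real_algebra_1,comm_ring_1}"
  assumes "linear f"
  shows "fps_map f (fps_ln1p 1) = fps_const (f 1) * fps_ln1p 1"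
  by (rule fps_ext) (simp add: fps_ln1p_def linear_scale[OF assms] linear_0[OF assms])

definition fps_X_over_1_plus_X :: "'a::comm_ring_1 fps" where
  "fps_X_over_1_plus_X = fps_X * fps_geom (- 1)"

lemma fps_X_over_1_plus_X_nth_0 [simp]: "fps_X_over_1_plus_X $ 0 = 0"
  by (simp add: fps_X_over_1_plus_X_def)

lemma fps_one_plus_X_mult_geom: "(1 + fps_X) * fps_geom (- 1 :: 'a::comm_ring_1) = 1"
  using fps_geom_inverse[of "1 :: 'a"] by simp

lemma one_plus_X_mult_fps_X_over_1_plus_X:
  "(1 + fps_X) * fps_X_over_1_plus_X = (fps_X :: 'a::comm_ring_1 fps)"
  by (simp add: fps_X_over_1_plus_X_def mult.left_commute[of "1 + fps_X"] fps_one_plus_X_mult_geom)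

lemma fps_X_over_1_plus_X_conv_geom:
  "fps_X_over_1_plus_X = (1 - fps_geom (- 1) :: 'a::comm_ring_1 fps)"
proof -
  have "fps_X_over_1_plus_X = (1 + fps_X) * fps_geom (- 1) - fps_geom (- 1 :: 'a)"
    by (simp add: fps_X_over_1_plus_X_def algebra_simps)
  then show ?thesis by (simp add: fps_one_plus_X_mult_geom)
qed

lemma fps_deriv_fps_X_over_1_plus_X:
  "fps_deriv fps_X_over_1_plus_X = (fps_geom (- 1) ^ 2 :: 'a::comm_ring_1 fps)"
proof -
  let ?g = "fps_geom (- 1 :: 'a)"
  have "fps_deriv ((1 + fps_X) * ?g) = 0"
    by (simp add: fps_one_plus_X_mult_geom)
  then have "?g * (?g + (1 + fps_X) * fps_deriv ?g) = 0"
    by (simp add: algebra_simps)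
  then have "?g ^ 2 + ((1 + fps_X) * ?g) * fps_deriv ?g = 0"
    by (simp add: algebra_simps power2_eq_square)
  then have "fps_deriv ?g = - (?g ^ 2)"
    by (simp add: fps_one_plus_X_mult_geom add_eq_0_iff)
  then show ?thesis
    by (simp add: fps_X_over_1_plus_X_conv_geom)
qed

lemma fps_map_of_real_X_over_1_plus_X: "fps_map of_real fps_X_over_1_plus_X = fps_X_over_1_plus_X"
  by (rule fps_ext) (simp add: fps_X_over_1_plus_X_def)

(* Both sides vanish at 0 and L = ln (1 + a z) is determined by (1 + a z) L' = a; the
   right-hand side satisfies it because 1 + a z = (1 + z) (1 + (a - 1) W). *)
lemma fps_ln1p_shift:
  fixes a :: "'a::{real_algebra_1,comm_ring_1}"
  shows "fps_ln1p a = fps_ln1p 1 + (fps_ln1p (a - 1) oo fps_X_over_1_plus_X)"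
proof -
  define c where "c = a - 1"
  let ?W = "fps_X_over_1_plus_X :: 'a fps" and ?g = "fps_geom (- 1) :: 'a fps"
  let ?h = "fps_geom (- c) oo ?W"
  let ?D = "fps_ln1p a - fps_ln1p 1 - (fps_ln1p c oo ?W)"
  have a_eq: "fps_const a = fps_const c + 1"
    by (rule fps_ext) (simp add: c_def)
  have factor: "(1 + fps_X) * (1 + fps_const c * ?W) = 1 + fps_const a * fps_X"
  proof -
    have "(1 + fps_X) * (1 + fps_const c * ?W) = 1 + fps_X + fps_const c * ((1 + fps_X) * ?W)"
      by (simp add: algebra_simps)
    then show ?thesis
      by (simp only: one_plus_X_mult_fps_X_over_1_plus_X a_eq) (simp add: algebra_simps)
  qed
  have h: "(1 + fps_const c * ?W) * ?h = 1"
  proof -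
    have "(1 + fps_const c * fps_X) oo ?W = 1 + fps_const c * ?W"
      by (simp add: fps_compose_add_distrib fps_const_mult_apply_left[symmetric])
    then show ?thesis
      using arg_cong[OF fps_geom_inverse[of c], of "\<lambda>F. F oo ?W"]
      by (simp add: fps_compose_mult_distrib_ring)
  qed
  have deriv: "fps_deriv ?D = fps_const a * fps_geom (- a) - ?g - fps_const c * ?h * ?g ^ 2"
    by (simp add: fps_deriv_fps_ln1p fps_compose_deriv_ring fps_deriv_fps_X_over_1_plus_X
        fps_const_mult_apply_left)
  have "(1 + fps_const a * fps_X) * fps_deriv ?D
      = (1 + fps_const a * fps_X) * (fps_const a * fps_geom (- a))
        - (1 + fps_const a * fps_X) * ?g
        - (1 + fps_const a * fps_X) * (fps_const c * ?h * ?g ^ 2)"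
    by (simp only: deriv right_diff_distrib)
  also have "\<dots> = fps_const a * ((1 + fps_const a * fps_X) * fps_geom (- a))
        - ((1 + fps_X) * ?g) * (1 + fps_const c * ?W)
        - fps_const c * ((1 + fps_X) * ?g) * ((1 + fps_const c * ?W) * ?h) * ?g"
    by (simp only: factor[symmetric]) (simp only: power2_eq_square mult_ac)
  also have "\<dots> = fps_const c * (1 - ?W - ?g)"
    by (simp only: fps_geom_inverse fps_one_plus_X_mult_geom h mult_1_left mult_1_right)
      (simp add: a_eq algebra_simps)
  also have "\<dots> = 0"
    by (simp add: fps_X_over_1_plus_X_conv_geom)
  finally have "fps_geom (- a) * ((1 + fps_const a * fps_X) * fps_deriv ?D) = 0"
    by simp
  then have "fps_deriv ?D = 0 * ?D"
    by (simp add: fps_geom_inverse mult.assoc[symmetric] mult.commute[of "fps_geom (- a)"])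
  then have "?D = 0"
    by (rule fps_ode_unique) simp_all
  then show ?thesis
    by (simp add: c_def algebra_simps)
qed

definition fps_exp_series :: "'a::real_algebra_1 fps" where
  "fps_exp_series = Abs_fps (\<lambda>k. of_real (1 / fact k))"

lemma fps_exp_alg_eq_compose: "fps_exp_alg G = fps_exp_series oo G"
  by (rule fps_ext) (simp add: fps_exp_alg_def fps_exp_series_def fps_compose_nth
      scaleR_conv_of_real atLeast0AtMost)

lemma fps_deriv_fps_exp_series: "fps_deriv fps_exp_series = (fps_exp_series :: 'a::real_algebra_1 fps)"
proof (rule fps_ext)
  fix k
  have "fps_deriv fps_exp_series $ k = (of_real (real (Suc k) * (1 / fact (Suc k))) :: 'a)"
    by (simp only: fps_deriv_nth fps_exp_series_def fps_nth_Abs_fps of_real_mult of_real_of_nat_eq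
        Suc_eq_plus1)
  also have "real (Suc k) * (1 / fact (Suc k)) = 1 / fact k"
    by simp
  finally show "fps_deriv fps_exp_series $ k = (fps_exp_series :: 'a fps) $ k"
    by (simp add: fps_exp_series_def)
qed

lemma fps_exp_alg_nth_0 [simp]: "fps_exp_alg G $ 0 = 1"
  by (simp add: fps_exp_alg_def)

lemma fps_deriv_fps_exp_alg:
  fixes G :: "'a::{real_algebra_1,comm_ring_1} fps"
  assumes "G $ 0 = 0"
  shows "fps_deriv (fps_exp_alg G) = fps_deriv G * fps_exp_alg G"
  by (simp add: fps_exp_alg_eq_compose fps_compose_deriv_ring[OF assms] fps_deriv_fps_exp_series
      mult.commute)

lemma fps_exp_alg_unique:
  fixes F G :: "'a::{real_algebra_1,comm_ring_1} fps"
  assumes "G $ 0 = 0" and "fps_deriv F = fps_deriv G * F" and "F $ 0 = 1"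
  shows "F = fps_exp_alg G"
  by (rule fps_ode_unique[OF assms(2) fps_deriv_fps_exp_alg[OF assms(1)]]) (simp add: assms(3))

lemma fps_exp_alg_add:
  fixes G H :: "'a::{real_algebra_1,comm_ring_1} fps"
  assumes "G $ 0 = 0" and "H $ 0 = 0"
  shows "fps_exp_alg (G + H) = fps_exp_alg G * fps_exp_alg H"
  by (rule fps_exp_alg_unique[symmetric]) (simp_all add: assms fps_deriv_fps_exp_alg algebra_simps)

lemma fps_exp_alg_of_nat_mult:
  fixes G :: "'a::{real_algebra_1,comm_ring_1} fps"
  assumes "G $ 0 = 0"
  shows "fps_exp_alg (of_nat n * G) = fps_exp_alg G ^ n"
proof (induction n)
  case 0
  have "fps_exp_alg (0 :: 'a fps) = 1"
    by (rule fps_exp_alg_unique[symmetric]) simp_all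
  then show ?case
    by simp
next
  case (Suc n)
  have "fps_exp_alg (of_nat (Suc n) * G) = fps_exp_alg (G + of_nat n * G)"
    by (simp add: algebra_simps)
  also have "\<dots> = fps_exp_alg G ^ Suc n"
    using assms Suc by (simp add: fps_exp_alg_add)
  finally show ?case .
qed

lemma fps_exp_alg_compose:
  fixes G c :: "'a::{real_algebra_1,comm_ring_1} fps"
  assumes "G $ 0 = 0" and "c $ 0 = 0"
  shows "fps_exp_alg (G oo c) = fps_exp_alg G oo c"
  by (rule fps_exp_alg_unique[symmetric])
    (simp_all add: assms fps_compose_deriv_ring fps_deriv_fps_exp_alg
      fps_compose_mult_distrib_ring mult_ac)

lemma fps_exp_alg_fps_ln1p_1:
  "fps_exp_alg (fps_ln1p 1) = (1 + fps_X :: 'a::{real_algebra_1,comm_ring_1} fps)"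
  by (rule fps_exp_alg_unique[symmetric])
    (simp_all add: fps_deriv_fps_ln1p fps_one_plus_X_mult_geom mult.commute)

lemma fps_one_plus_X_power_mult_top:
  fixes F :: "'a::comm_semiring_1 fps"
  assumes "\<forall>k>t. F $ k = 0"
  shows "(\<forall>k>t + m. ((1 + fps_X) ^ m * F) $ k = 0)
    \<and> ((1 + fps_X) ^ m * F) $ (t + m) = F $ t"
proof (induction m)
  case 0
  then show ?case using assms by simp
next
  case (Suc m)
  then show ?case
    by (auto simp: mult.assoc fps_mult_fps_X_plus_1_nth)
qed

lemma fps_one_plus_X_power_nth_eq_0:
  "m < k \<Longrightarrow> ((1 + fps_X) ^ m :: 'a::comm_semiring_1 fps) $ k = 0"
  using fps_one_plus_X_power_mult_top[of 0 "1 :: 'a fps" m] by simp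

lemma fps_degree_le_cancel_one_plus_X_power:
  fixes F :: "'a::comm_semiring_1 fps"
  assumes "\<forall>k>M. F $ k = 0" and "\<forall>k>d + m. ((1 + fps_X) ^ m * F) $ k = 0"
  shows "\<forall>k>d. F $ k = 0"
proof (rule ccontr)
  assume "\<not> (\<forall>k>d. F $ k = 0)"
  then have ne: "{k. d < k \<and> F $ k \<noteq> 0} \<noteq> {}" by auto
  have fin: "finite {k. d < k \<and> F $ k \<noteq> 0}"
    using assms(1) by (auto intro: finite_subset[of _ "{..M}"] simp: not_le[symmetric])
  define t where "t = Max {k. d < k \<and> F $ k \<noteq> 0}"
  have t: "d < t" "F $ t \<noteq> 0"
    using Max_in[OF fin ne] by (simp_all add: t_def)
  have "F $ k = 0" if "t < k" for k
  proof (rule ccontr)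
    assume "F $ k \<noteq> 0"
    with that t(1) have "k \<le> t"
      unfolding t_def by (intro Max_ge[OF fin]) simp
    with that show False by simp
  qed
  then have "\<forall>k>t. F $ k = 0" by blast
  then have "((1 + fps_X) ^ m * F) $ (t + m) = F $ t"
    by (rule fps_one_plus_X_power_mult_top[THEN conjunct2])
  with assms(2) t show False by simp
qed

lemma fps_nth_of_binomial_ode:
  fixes F :: "'a::comm_ring_1 fps"
  assumes "(1 + fps_X) * fps_deriv F = fps_const c * F"
  shows "of_nat (fact k) * F $ k = (\<Prod>j<k. c - of_nat j) * F $ 0"
proof (induction k)
  case 0
  then show ?case by simp
next
  case (Suc k)
  have "((1 + fps_X) * fps_deriv F) $ k = (fps_const c * F) $ k"
    by (simp only: assms)
  then have rec: "of_nat (Suc k) * F $ Suc k = (c - of_nat k) * F $ k"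
    by (cases k) (simp_all add: fps_mult_fps_X_plus_1_nth algebra_simps del: of_nat_Suc)
  have "of_nat (fact (Suc k)) * F $ Suc k = of_nat (fact k) * (of_nat (Suc k) * F $ Suc k)"
    by (simp only: fact_Suc of_nat_id of_nat_mult mult_ac)
  also have "\<dots> = (c - of_nat k) * (of_nat (fact k) * F $ k)"
    by (simp only: rec mult_ac)
  also have "\<dots> = (\<Prod>j<Suc k. c - of_nat j) * F $ 0"
    by (simp only: Suc.IH) (simp only: prod.lessThan_Suc mult_ac)
  finally show ?case .
qed

lemma fps_degree_le_one_plus_X_power_mult_compose:
  fixes F :: "'a::comm_ring_1 fps"
  assumes "\<forall>k>N. F $ k = 0"
  shows "\<forall>k>N. ((1 + fps_X) ^ N * (F oo fps_X_over_1_plus_X)) $ k = 0"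
proof -
  have monomial:
    "(1 + fps_X) ^ N * fps_X_over_1_plus_X ^ j = fps_X ^ j * (1 + fps_X :: 'a fps) ^ (N - j)"
    if "j \<le> N" for j
  proof -
    have "(1 + fps_X :: 'a fps) ^ N = (1 + fps_X) ^ (N - j) * (1 + fps_X) ^ j"
      using that by (simp flip: power_add)
    then have "(1 + fps_X) ^ N * fps_X_over_1_plus_X ^ j
        = (1 + fps_X) ^ (N - j) * ((1 + fps_X) * fps_X_over_1_plus_X :: 'a fps) ^ j"
      by (simp only: power_mult_distrib mult.assoc)
    also have "\<dots> = fps_X ^ j * (1 + fps_X) ^ (N - j)"
      by (simp only: one_plus_X_mult_fps_X_over_1_plus_X) (rule mult.commute)
    finally show ?thesis .
  qed
  have "(1 + fps_X) ^ N * (F oo fps_X_over_1_plus_X)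
      = (\<Sum>j\<le>N. (1 + fps_X) ^ N * (fps_const (F $ j) * fps_X_over_1_plus_X ^ j))"
    by (subst fps_poly_sum_fps_X[OF assms])
      (simp only: atLeast0AtMost fps_compose_sum_distrib sum_distrib_left
        fps_compose_monomial fps_X_over_1_plus_X_nth_0)
  also have "\<dots> = (\<Sum>j\<le>N. fps_const (F $ j) * (fps_X ^ j * (1 + fps_X) ^ (N - j)))"
    by (rule sum.cong) (simp_all add: mult.left_commute[of "(1 + fps_X) ^ N"] monomial)
  finally show ?thesis
    by (auto simp: fps_sum_nth fps_X_power_mult_nth fps_one_plus_X_power_nth_eq_0 intro!: sum.neutral)
qed

lemma linear_fps_map_compose_X_over_1_plus_X:
  fixes f :: "'a::{real_algebra_1,comm_ring_1} \<Rightarrow> 'b::{real_algebra_1,comm_ring_1}"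
  assumes "linear f"
  shows "fps_map f (F oo fps_X_over_1_plus_X) = fps_map f F oo fps_X_over_1_plus_X"
  using linear_fps_map_compose[OF assms, of F fps_X_over_1_plus_X]
  by (simp add: fps_map_of_real_X_over_1_plus_X)

context
  fixes f :: "'a::{real_algebra_1,comm_ring_1} \<Rightarrow> 'b::{real_algebra_1,comm_ring_1}"
  assumes lin: "linear f"
begin

lemma char_fun_shift:
  "char_fun f a = char_fun f 1 * (char_fun f (a - 1) oo fps_X_over_1_plus_X)"
proof -
  have "fps_map f (fps_ln1p a)
      = fps_map f (fps_ln1p 1) + (fps_map f (fps_ln1p (a - 1)) oo fps_X_over_1_plus_X)"
    by (subst fps_ln1p_shift[of a])
      (simp add: linear_fps_map_add[OF lin] linear_fps_map_compose_X_over_1_plus_X[OF lin])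
  then show ?thesis
    by (simp add: char_fun_conv_fps_map fps_exp_alg_add fps_exp_alg_compose linear_0[OF lin])
qed

lemma char_fun_1_conv: "char_fun f 1 = fps_exp_alg (fps_const (f 1) * fps_ln1p 1)"
  by (simp add: char_fun_conv_fps_map linear_fps_map_fps_ln1p_1[OF lin])

lemma char_fun_1_nth: "of_nat (fact k) * char_fun f 1 $ k = (\<Prod>j<k. f 1 - of_nat j)"
proof -
  let ?E = "char_fun f 1"
  have "fps_deriv ?E = fps_const (f 1) * fps_geom (- 1) * ?E"
    by (simp add: char_fun_1_conv fps_deriv_fps_exp_alg fps_deriv_fps_ln1p)
  then have "(1 + fps_X) * fps_deriv ?E = fps_const (f 1) * ((1 + fps_X) * fps_geom (- 1)) * ?E"
    by (simp add: mult_ac)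
  then have "(1 + fps_X) * fps_deriv ?E = fps_const (f 1) * ?E"
    by (simp add: fps_one_plus_X_mult_geom)
  from fps_nth_of_binomial_ode[OF this, of k] show ?thesis
    by (simp add: char_fun_1_conv)
qed

lemma char_fun_1_eq: "f 1 = of_nat n \<Longrightarrow> char_fun f 1 = (1 + fps_X) ^ n"
  by (simp add: char_fun_1_conv fps_of_nat fps_exp_alg_of_nat_mult fps_exp_alg_fps_ln1p_1)

end

theorem mainTheorem2:
  fixes f :: "'a::{real_algebra_1,comm_ring_1} \<Rightarrow> 'b::{real_algebra_1,comm_ring_1}"
    and N :: nat
  assumes conn: "connected_alg TYPE('b)"
    and lin: "linear f"
    and poly: "\<forall>a. \<forall>k>N. fps_nth (char_fun f a) k = 0"
  shows "\<exists>n::nat. n \<le> N \<and> f 1 = of_nat n \<and> char_fun f 1 = (1 + fps_X) ^ n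
           \<and> (\<forall>a. \<forall>k>n. fps_nth (char_fun f a) k = 0)"
proof -
  have "(\<Prod>j\<le>N. f 1 - of_nat j) = 0"
    using char_fun_1_nth[OF lin, of "Suc N"] poly by (simp add: lessThan_Suc_atMost)
  then obtain n where n: "n \<le> N" "f 1 = of_nat n"
    using conn by (auto simp: connected_alg_def)
  have E1: "char_fun f 1 = (1 + fps_X) ^ n"
    using char_fun_1_eq[OF lin n(2)] .
  have "\<forall>k>n. char_fun f a $ k = 0" for a
  proof (rule fps_degree_le_cancel_one_plus_X_power)
    show "\<forall>k>N. char_fun f a $ k = 0"
      using poly by simp
    have "(1 + fps_X) ^ (N - n) * char_fun f a
        = (1 + fps_X) ^ N * (char_fun f (a - 1) oo fps_X_over_1_plus_X)"
      using n(1) by (simp add: char_fun_shift[OF lin, of a] E1 mult.assoc[symmetric] flip: power_add)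
    moreover have
      "\<forall>k>N. ((1 + fps_X) ^ N * (char_fun f (a - 1) oo fps_X_over_1_plus_X)) $ k = 0"
      using poly by (intro fps_degree_le_one_plus_X_power_mult_compose) blast
    ultimately show "\<forall>k>n + (N - n). ((1 + fps_X) ^ (N - n) * char_fun f a) $ k = 0"
      using n(1) by simp
  qed
  with n E1 show ?thesis
    by blast
qed

end
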